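(* Let $X_1,\ldots,X_n$ be independent Bernoulli random variables (each taking values in $\{0,1\}$), let $S=\sum_{i=1}^n X_i$, and let $Z$ be a Poisson random variable with mean $1$, independent of $S$. Assume that $S+Z$ has a unique mode $m_1$, and let $m_0$ be any mode of $S$. Then $$m_0\leq m_1\leq m_0+2.$$
   Context: A mode of a random variable $X$ taking values in $\{0,1,2,\ldots\}$ is any integer $m$ at which the probability mass function $k\mapsto \Pr(X=k)$ attains its maximum. The Bernoulli variables may have arbitrary (possibly different) success probabilities. *)

theory Defs
  imports "HOL-Probability.Probability"
begin

definition is_mode :: "nat pmf \<Rightarrow> nat \<Rightarrow> bool" where
  "is_mode q m \<longleftrightarrow> (\<forall>k. pmf q k \<le> pmf q m)"

definition bernoulli_sum_pmf :: "nat \<Rightarrow> (nat \<Rightarrow> real) \<Rightarrow> nat pmf" where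
  "bernoulli_sum_pmf n p =
     map_pmf (\<lambda>x. \<Sum>i<n. of_bool (x i)) (Pi_pmf {..<n} False (\<lambda>i. bernoulli_pmf (p i)))"

definition indep_sum_pmf :: "nat pmf \<Rightarrow> nat pmf \<Rightarrow> nat pmf" where
  "indep_sum_pmf P Q = bind_pmf P (\<lambda>s. map_pmf (\<lambda>z. s + z) Q)"

end

theory Submission
  imports Defs
begin

text \<open>
  The proof rests on a Darroch-type bound for the law \<open>P\<close> of
  Poisson(\<open>\<lambda>\<close>) plus independent Bernoulli summands: for \<open>k \<ge> \<lambda> + \<mu>\<close> one has
  \<open>(k+1) P(k+1) \<le> (\<lambda> + \<mu>) P(k)\<close> (theorem \<open>bern_pois_tail_ratio\<close>).  It follows from two
  Stein-type identities together with log-concavity of the laws involved, by induction on the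
  number of summands.

  Applied with \<open>\<lambda> = 0\<close> to \<open>S\<close> and to \<open>n - S\<close> it locates every mode \<open>m\<^sub>0\<close> of \<open>S\<close>
  within distance 1 of \<open>\<mu>\<close> and shows that \<open>S\<close>, hence also \<open>S + Z\<close>, increases up to \<open>m\<^sub>0\<close>;
  applied with \<open>\<lambda> = 1\<close> it shows that \<open>S + Z\<close> decreases from \<open>m\<^sub>0 + 2\<close> on.
\<close>

text \<open>The (integer-indexed) law of \<open>Q + \<Sum>i\<in>A. X\<^sub>i\<close>, where \<open>q\<close> is the law of \<open>Q\<close> and the
  \<open>X\<^sub>i\<close> are independent Bernoulli variables with parameters \<open>p i\<close>; the sum ranges over
  the set \<open>B\<close> of summands equal to 1.\<close>

definition bern_conv :: "(int \<Rightarrow> real) \<Rightarrow> (nat \<Rightarrow> real) \<Rightarrow> nat set \<Rightarrow> int \<Rightarrow> real" where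
  "bern_conv q p A k =
     (\<Sum>B\<in>Pow A. (\<Prod>i\<in>B. p i) * (\<Prod>i\<in>A - B. 1 - p i) * q (k - int (card B)))"

definition bern_mix :: "real \<Rightarrow> (int \<Rightarrow> real) \<Rightarrow> int \<Rightarrow> real" where
  "bern_mix r g x = (1 - r) * g x + r * g (x - 1)"

definition probs_on :: "(nat \<Rightarrow> real) \<Rightarrow> nat set \<Rightarrow> bool" where
  "probs_on p A \<longleftrightarrow> (\<forall>i\<in>A. 0 \<le> p i \<and> p i \<le> 1)"

lemma bern_conv_empty [simp]: "bern_conv q p {} = q"
  by (simp add: bern_conv_def fun_eq_iff)

lemma bern_conv_insert:
  assumes "finite A" "a \<notin> A"
  shows "bern_conv q p (insert a A) = bern_mix (p a) (bern_conv q p A)"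
proof
  fix k
  let ?t = "\<lambda>B. (\<Prod>i\<in>B. p i) * (\<Prod>i\<in>insert a A - B. 1 - p i) * q (k - int (card B))"
  have inj: "inj_on (insert a) (Pow A)"
    using assms by (auto simp: inj_on_def)
  have without_a: "(\<Sum>B\<in>Pow A. ?t B) = (1 - p a) * bern_conv q p A k"
    unfolding bern_conv_def sum_distrib_left
  proof (rule sum.cong [OF refl])
    fix B assume "B \<in> Pow A"
    then have "insert a A - B = insert a (A - B)" "a \<notin> A - B" "finite (A - B)"
      using assms by auto
    then show "?t B = (1 - p a) * ((\<Prod>i\<in>B. p i) * (\<Prod>i\<in>A - B. 1 - p i) * q (k - int (card B)))"
      by simp
  qed
  have with_a: "(\<Sum>B\<in>insert a ` Pow A. ?t B) = p a * bern_conv q p A (k - 1)"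
    unfolding bern_conv_def sum_distrib_left sum.reindex [OF inj] o_def
  proof (rule sum.cong [OF refl])
    fix B assume "B \<in> Pow A"
    then have "insert a A - insert a B = A - B" "a \<notin> B" "finite B"
      using assms by (auto intro: finite_subset)
    then show "?t (insert a B) =
        p a * ((\<Prod>i\<in>B. p i) * (\<Prod>i\<in>A - B. 1 - p i) * q (k - 1 - int (card B)))"
      by (simp add: algebra_simps)
  qed
  have "bern_conv q p (insert a A) k = (\<Sum>B\<in>Pow A. ?t B) + (\<Sum>B\<in>insert a ` Pow A. ?t B)"
    unfolding bern_conv_def Pow_insert using assms by (intro sum.union_disjoint) auto
  then show "bern_conv q p (insert a A) k = bern_mix (p a) (bern_conv q p A) k"
    using without_a with_a by (simp add: bern_mix_def)
qed

lemma bern_conv_remove: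
  assumes "finite A" "a \<in> A"
  shows "bern_conv q p A = bern_mix (p a) (bern_conv q p (A - {a}))"
  using bern_conv_insert [of "A - {a}" a q p] assms by (simp add: insert_absorb)

lemma bern_conv_neg:
  assumes "\<And>j. j < 0 \<Longrightarrow> q j = 0" "k < 0"
  shows "bern_conv q p A k = 0"
  using assms unfolding bern_conv_def by (intro sum.neutral) auto

lemma bern_conv_nonneg:
  assumes "\<And>j. 0 \<le> q j" "finite A" "probs_on p A"
  shows "0 \<le> bern_conv q p A k"
  using assms(2,3)
proof (induction A arbitrary: k rule: finite_induct)
  case (insert a A)
  then show ?case
    by (simp add: bern_conv_insert bern_mix_def probs_on_def)
qed (simp add: assms(1))

text \<open>Log-concavity of a sequence, in the form \<open>g(i-1) g(j+1) \<le> g(i) g(j)\<close> for \<open>i \<le> j\<close>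
  (which for nonnegative sequences without internal zeros is the usual \<open>g(k)\<^sup>2 \<ge> g(k-1) g(k+1)\<close>).\<close>

definition log_concave_seq :: "(int \<Rightarrow> real) \<Rightarrow> bool" where
  "log_concave_seq g \<longleftrightarrow> (\<forall>i j. i \<le> j \<longrightarrow> g (i - 1) * g (j + 1) \<le> g i * g j)"

text \<open>Adding a Bernoulli summand preserves log-concavity: the defect of the mixture is a
  nonnegative combination of three defects of \<open>g\<close>.\<close>

lemma bern_mix_log_concave:
  assumes lc: "log_concave_seq g" and r: "0 \<le> r" "r \<le> 1"
  shows "log_concave_seq (bern_mix r g)"
  unfolding log_concave_seq_def
proof (intro allI impI)
  fix i j :: int assume "i \<le> j"
  have lc': "g (a - 1) * g (b + 1) \<le> g a * g b" if "a \<le> b" for a b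
    using lc that unfolding log_concave_seq_def by blast
  have outer: "g (i - 1) * g (j + 1) \<le> g i * g j" using lc' \<open>i \<le> j\<close> .
  have inner: "g (i - 2) * g j \<le> g (i - 1) * g (j - 1)" using lc' [of "i - 1" "j - 1"] \<open>i \<le> j\<close> by simp
  have cross: "g (i - 2) * g (j + 1) \<le> g i * g (j - 1)"
  proof (cases "i = j")
    case True
    then show ?thesis using lc' [of "i - 1" i] by (simp add: mult.commute)
  next
    case False
    have "g (i - 2) * g (j + 1) \<le> g (i - 1) * g j" using lc' [of "i - 1" j] \<open>i \<le> j\<close> by simp
    also have "\<dots> \<le> g i * g (j - 1)" using lc' [of i "j - 1"] \<open>i \<le> j\<close> False by simp
    finally show ?thesis .
  qed
  have "bern_mix r g i * bern_mix r g j - bern_mix r g (i - 1) * bern_mix r g (j + 1) =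
      (1 - r)\<^sup>2 * (g i * g j - g (i - 1) * g (j + 1))
    + r * (1 - r) * (g i * g (j - 1) - g (i - 2) * g (j + 1))
    + r\<^sup>2 * (g (i - 1) * g (j - 1) - g (i - 2) * g j)"
    unfolding bern_mix_def by (simp add: algebra_simps power2_eq_square)
  also have "\<dots> \<ge> 0"
    using outer inner cross r by (intro add_nonneg_nonneg mult_nonneg_nonneg) auto
  finally show "bern_mix r g (i - 1) * bern_mix r g (j + 1) \<le> bern_mix r g i * bern_mix r g j"
    by simp
qed

lemma bern_conv_log_concave:
  assumes "log_concave_seq q" "finite A" "probs_on p A"
  shows "log_concave_seq (bern_conv q p A)"
  using assms(2,3)
proof (induction A rule: finite_induct)
  case (insert a A)
  then show ?case
    by (simp add: bern_conv_insert probs_on_def bern_mix_log_concave)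
qed (simp add: assms(1))

text \<open>The Poisson(\<open>lam\<close>) probabilities on the integers; \<open>pois 0\<close> is the point mass at 0, so
  \<open>bern_conv (pois 0) p A\<close> is the law of a pure Bernoulli sum.\<close>

definition pois :: "real \<Rightarrow> int \<Rightarrow> real" where
  "pois lam k = (if k < 0 then 0 else lam ^ nat k / fact (nat k) * exp (- lam))"

lemma pois_neg: "k < 0 \<Longrightarrow> pois lam k = 0"
  by (simp add: pois_def)

lemma pois_nonneg: "0 \<le> lam \<Longrightarrow> 0 \<le> pois lam k"
  by (simp add: pois_def)

lemma pois_zero: "pois 0 = (\<lambda>k. of_bool (k = 0))"
  by (simp add: pois_def fun_eq_iff)

lemma pois_stein: "real_of_int (k + 1) * pois lam (k + 1) = lam * pois lam k"
proof (cases "k < 0")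
  case False
  then obtain n where k: "k = int n" by (metis nonneg_int_cases not_less)
  have "nat (k + 1) = Suc n" "real_of_int (k + 1) = real (Suc n)" using k by simp_all
  then have "real_of_int (k + 1) * pois lam (k + 1) = real (Suc n) * (lam ^ Suc n / fact (Suc n) * exp (- lam))"
    unfolding pois_def by (simp only:) simp
  also have "\<dots> = lam * (lam ^ n / fact n * exp (- lam))"
    by simp
  also have "\<dots> = lam * pois lam k"
    unfolding k pois_def by simp
  finally show ?thesis .
qed (auto simp: pois_def)

lemma pois_log_concave:
  assumes "0 \<le> lam"
  shows "log_concave_seq (pois lam)"
  unfolding log_concave_seq_def
proof (intro allI impI)
  fix i j :: int assume "i \<le> j"
  show "pois lam (i - 1) * pois lam (j + 1) \<le> pois lam i * pois lam j"
  proof (cases "i \<le> 0")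
    case True
    then show ?thesis using assms by (simp add: pois_neg pois_nonneg)
  next
    case False
    have "lam * (real_of_int (j + 1) * (pois lam (i - 1) * pois lam (j + 1)))
        = (lam * pois lam (i - 1)) * (real_of_int (j + 1) * pois lam (j + 1))"
      by (simp only: ac_simps)
    also have "\<dots> = real_of_int i * (lam * (pois lam i * pois lam j))"
      using pois_stein [of "i - 1" lam] pois_stein [of j lam] by simp
    also have "\<dots> \<le> real_of_int (j + 1) * (lam * (pois lam i * pois lam j))"
      using \<open>i \<le> j\<close> assms by (intro mult_right_mono) (auto simp: pois_nonneg)
    finally have *: "lam * (real_of_int (j + 1) * (pois lam (i - 1) * pois lam (j + 1)))
        \<le> lam * (real_of_int (j + 1) * (pois lam i * pois lam j))"
      by (simp add: algebra_simps)
    show ?thesis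
    proof (cases "lam = 0")
      case True
      then show ?thesis using \<open>i \<le> j\<close> False by (simp add: pois_zero)
    next
      case False
      with * assms \<open>\<not> i \<le> 0\<close> \<open>i \<le> j\<close> show ?thesis by simp
    qed
  qed
qed

text \<open>The Stein identity propagates to \<open>Q + S\<close>, with a correction term for each Bernoulli summand
  (the size-biasing of \<open>S\<close> picks out one summand equal to 1).\<close>

lemma bern_conv_stein:
  assumes stein: "\<And>k. real_of_int (k + 1) * q (k + 1) = lam * q k" and "finite A"
  shows "real_of_int (k + 1) * bern_conv q p A (k + 1)
       = lam * bern_conv q p A k + (\<Sum>i\<in>A. p i * bern_conv q p (A - {i}) k)"
  using assms(2)
proof (induction A arbitrary: k rule: finite_induct)
  case (insert a A)
  let ?F = "bern_conv q p"
  have drop_other: "?F (insert a A - {i}) = bern_mix (p a) (?F (A - {i}))" if "i \<in> A" for i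
  proof -
    have "insert a A - {i} = insert a (A - {i})" using insert that by auto
    then show ?thesis using insert by (simp add: bern_conv_insert)
  qed
  have "(\<Sum>i\<in>A. p i * ?F (insert a A - {i}) k)
      = (\<Sum>i\<in>A. (1 - p a) * (p i * ?F (A - {i}) k) + p a * (p i * ?F (A - {i}) (k - 1)))"
    by (rule sum.cong) (simp_all add: drop_other bern_mix_def algebra_simps)
  then have sum_eq: "(\<Sum>i\<in>insert a A. p i * ?F (insert a A - {i}) k)
      = p a * ?F A k + (1 - p a) * (\<Sum>i\<in>A. p i * ?F (A - {i}) k)
        + p a * (\<Sum>i\<in>A. p i * ?F (A - {i}) (k - 1))"
    using insert.hyps by (simp add: Diff_insert_absorb sum.distrib sum_distrib_left)
  have ih: "real_of_int k * ?F A k = lam * ?F A (k - 1) + (\<Sum>i\<in>A. p i * ?F (A - {i}) (k - 1))"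
    using insert.IH [of "k - 1"] by simp
  show ?case
    using insert.IH [of k] ih sum_eq insert.hyps by (simp add: bern_conv_insert bern_mix_def algebra_simps)
qed (use stein in simp)

text \<open>Backward difference; \<open>bdiff g k < 0\<close> means that \<open>g\<close> strictly rises from \<open>k - 1\<close> to \<open>k\<close>.\<close>

definition bdiff :: "(int \<Rightarrow> real) \<Rightarrow> int \<Rightarrow> real" where
  "bdiff g k = g (k - 1) - g k"

text \<open>Two exact identities expressing, with \<open>\<mu>\<close> the mean, the quantity \<open>\<mu> F(k) - (k+1) F(k+1)\<close>
  we want to be nonnegative and the quantity \<open>(k - \<mu>) F(k)\<close> known to be nonnegative beyond the
  mean, both in terms of the backward differences of the laws with one summand removed.\<close>

lemma bern_conv_mean_identities:
  fixes q :: "int \<Rightarrow> real" and p :: "nat \<Rightarrow> real"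
  assumes stein: "\<And>k. real_of_int (k + 1) * q (k + 1) = lam * q k" and fin: "finite A"
  defines "F \<equiv> bern_conv q p" and "mu \<equiv> lam + (\<Sum>i\<in>A. p i)"
  shows "mu * F A k - real_of_int (k + 1) * F A (k + 1) = (\<Sum>i\<in>A. (p i)\<^sup>2 * bdiff (F (A - {i})) k)"
    and "(real_of_int k - mu) * F A k
           = lam * bdiff (F A) k + (\<Sum>i\<in>A. p i * (1 - p i) * bdiff (F (A - {i})) k)"
proof -
  have drop: "F A x = (1 - p i) * F (A - {i}) x + p i * F (A - {i}) (x - 1)" if "i \<in> A" for i x
    unfolding F_def using bern_conv_remove [OF fin that] by (simp add: bern_mix_def)
  have stein_k: "real_of_int (k + 1) * F A (k + 1) = lam * F A k + (\<Sum>i\<in>A. p i * F (A - {i}) k)"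
    unfolding F_def using bern_conv_stein [OF stein fin] .
  have stein_km1: "real_of_int k * F A k = lam * F A (k - 1) + (\<Sum>i\<in>A. p i * F (A - {i}) (k - 1))"
    unfolding F_def using bern_conv_stein [OF stein fin, of "k - 1"] by simp
  have "mu * F A k - real_of_int (k + 1) * F A (k + 1) = (\<Sum>i\<in>A. p i * (F A k - F (A - {i}) k))"
    unfolding stein_k mu_def by (simp add: algebra_simps sum_distrib_left sum_distrib_right sum_subtractf)
  also have "\<dots> = (\<Sum>i\<in>A. (p i)\<^sup>2 * bdiff (F (A - {i})) k)"
    by (rule sum.cong) (auto simp: drop bdiff_def algebra_simps power2_eq_square)
  finally show "mu * F A k - real_of_int (k + 1) * F A (k + 1) = \<dots>" .
  have "(real_of_int k - mu) * F A k
      = lam * bdiff (F A) k + (\<Sum>i\<in>A. p i * (F (A - {i}) (k - 1) - F A k))"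
    unfolding left_diff_distrib stein_km1 mu_def bdiff_def
    by (simp add: algebra_simps sum_distrib_left sum_distrib_right sum_subtractf)
  also have "(\<Sum>i\<in>A. p i * (F (A - {i}) (k - 1) - F A k))
      = (\<Sum>i\<in>A. p i * (1 - p i) * bdiff (F (A - {i})) k)"
    by (rule sum.cong) (auto simp: drop bdiff_def algebra_simps)
  finally show "(real_of_int k - mu) * F A k = lam * bdiff (F A) k + \<dots>" .
qed

lemma bern_mix_bdiff_sign:
  assumes nonneg: "\<And>x. 0 \<le> g x" and lc: "log_concave_seq g"
    and rs: "0 \<le> r" "r \<le> s" "s \<le> 1"
    and rises: "bdiff (bern_mix r g) k < 0"
  shows "bdiff (bern_mix s g) k \<le> 0"
proof -
  define d0 where "d0 = g (k - 1) - g k"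
  define d1 where "d1 = g (k - 2) - g (k - 1)"
  have mix_diff: "bdiff (bern_mix t g) k = (1 - t) * d0 + t * d1" for t
    unfolding bdiff_def bern_mix_def d0_def d1_def by (simp add: algebra_simps)
  show ?thesis
  proof (cases "d0 \<ge> 0")
    case True
    have "r * (d1 - d0) < 0"
      using rises True unfolding mix_diff by (simp add: algebra_simps)
    then have "d1 - d0 < 0"
      using rs by (auto simp: mult_less_0_iff)
    then have "s * (d1 - d0) \<le> r * (d1 - d0)"
      using rs by (intro mult_right_mono_neg) auto
    then show ?thesis
      using rises unfolding mix_diff by (simp add: algebra_simps)
  next
    case False
    then have up: "g (k - 1) < g k" unfolding d0_def by simp
    have "g (k - 2) * g k \<le> g (k - 1) * g (k - 1)"
      using lc [unfolded log_concave_seq_def, rule_format, of "k - 1" "k - 1"] by simp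
    also have "\<dots> \<le> g (k - 1) * g k"
      using up nonneg [of "k - 1"] by (intro mult_left_mono) auto
    finally have "g (k - 2) \<le> g (k - 1)"
      using up nonneg [of "k - 1"] by (simp add: mult_le_cancel_right)
    then have "d1 \<le> 0" unfolding d1_def by simp
    then show ?thesis
      unfolding mix_diff using rs False by (simp add: mult_nonneg_nonpos add_nonpos_nonpos)
  qed
qed

lemma drop_gap_crossing:
  assumes q: "\<And>j. 0 \<le> q j" "log_concave_seq q" and fin: "finite A" and pr: "probs_on p A"
    and ij: "i \<in> A" "j \<in> A" "p j \<le> p i"
    and rises: "bdiff (bern_conv q p (A - {i})) k < 0"
  shows "bdiff (bern_conv q p (A - {j})) k \<le> 0"
proof (cases "i = j")
  case False
  define g where "g = bern_conv q p (A - {i} - {j})"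
  have pr': "probs_on p (A - {i} - {j})" using pr by (auto simp: probs_on_def)
  have "bern_conv q p (A - {i}) = bern_mix (p j) g"
    unfolding g_def using bern_conv_remove [of "A - {i}" j] fin ij False by auto
  moreover have "bern_conv q p (A - {j}) = bern_mix (p i) g"
    unfolding g_def using bern_conv_remove [of "A - {j}" i] fin ij False
    by (auto simp: Diff_insert2 [symmetric] insert_commute)
  moreover have "0 \<le> p j" using pr ij by (auto simp: probs_on_def)
  moreover have "p i \<le> 1" using pr ij by (auto simp: probs_on_def)
  ultimately show ?thesis
    using rises ij bern_mix_bdiff_sign [of g "p j" "p i" k]
      bern_conv_nonneg [OF q(1) _ pr'] bern_conv_log_concave [OF q(2) _ pr'] fin
    unfolding g_def by auto
qed (use rises in simp)

lemma drop_gap_crossing_all: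
  assumes q: "\<And>j. 0 \<le> q j" "log_concave_seq q" and fin: "finite A" and pr: "probs_on p A"
    and i: "i \<in> A" and rises: "bdiff (bern_conv q p (A - {i})) k < 0"
  shows "bdiff (bern_conv q p A) k \<le> 0"
proof -
  define g where "g = bern_conv q p (A - {i})"
  have pr': "probs_on p (A - {i})" using pr by (auto simp: probs_on_def)
  have "g = bern_mix 0 g" by (simp add: bern_mix_def fun_eq_iff)
  moreover have "bern_conv q p A = bern_mix (p i) g"
    unfolding g_def using bern_conv_remove [OF fin i] .
  ultimately show ?thesis
    using rises pr i bern_mix_bdiff_sign [of g 0 "p i" k]
      bern_conv_nonneg [OF q(1) _ pr'] bern_conv_log_concave [OF q(2) _ pr'] fin
    unfolding g_def probs_on_def by auto
qed

text \<open>Beyond the mean, the crossing property turns the second identity into the nonnegativity of the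
  first one, unless the largest parameter of a rising summand equals 1.\<close>

lemma bern_pois_gap_dichotomy:
  fixes p :: "nat \<Rightarrow> real"
  assumes lam: "0 \<le> lam" and fin: "finite A" and pr: "probs_on p A"
    and beyond_mean: "lam + (\<Sum>i\<in>A. p i) \<le> real_of_int k"
  defines "e \<equiv> \<lambda>i. bdiff (bern_conv (pois lam) p (A - {i})) k"
  shows "0 \<le> (\<Sum>i\<in>A. (p i)\<^sup>2 * e i) \<or> (\<exists>i\<in>A. p i = 1 \<and> e i < 0)"
proof (cases "\<forall>i\<in>A. 0 \<le> e i")
  case True
  then show ?thesis by (intro disjI1 sum_nonneg) auto
next
  case False
  have q: "\<And>j. 0 \<le> pois lam j" "log_concave_seq (pois lam)"
    using lam by (simp_all add: pois_nonneg pois_log_concave)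
  have p01: "0 \<le> p i" "p i \<le> 1" if "i \<in> A" for i
    using pr that by (auto simp: probs_on_def)
  define N where "N = {i\<in>A. e i < 0}"
  have "N \<noteq> {}" "finite N" using False fin unfolding N_def by auto
  define t where "t = Max (p ` N)"
  have "t \<in> p ` N" unfolding t_def using \<open>N \<noteq> {}\<close> \<open>finite N\<close> by (intro Max_in) auto
  then obtain i0 where i0: "i0 \<in> A" "e i0 < 0" "p i0 = t" unfolding N_def by auto
  have t_le: "p i \<le> t" if "i \<in> A" "e i < 0" for i
    unfolding t_def N_def using \<open>finite N\<close> that N_def by auto
  (* Removing a summand whose parameter is at most t never makes the law rise at k. *)
  have t_ge: "t < p i" if "i \<in> A" "0 < e i" for i
    using drop_gap_crossing [OF q fin pr i0(1) that(1)] i0 that unfolding e_def by force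
  have "0 \<le> (real_of_int k - (lam + (\<Sum>i\<in>A. p i))) * bern_conv (pois lam) p A k"
    using beyond_mean bern_conv_nonneg [OF q(1) fin pr] by simp
  then have "0 \<le> lam * bdiff (bern_conv (pois lam) p A) k + (\<Sum>i\<in>A. p i * (1 - p i) * e i)"
    using bern_conv_mean_identities(2) [where lam = lam and p = p and k = k, OF pois_stein fin]
    unfolding e_def by simp
  moreover have "lam * bdiff (bern_conv (pois lam) p A) k \<le> 0"
    using drop_gap_crossing_all [OF q fin pr i0(1)] i0(2) lam unfolding e_def
    by (simp add: mult_nonneg_nonpos)
  ultimately have "0 \<le> (\<Sum>i\<in>A. p i * (1 - p i) * e i)" by linarith
  then have "0 \<le> t * (\<Sum>i\<in>A. p i * (1 - p i) * e i)"
    using i0 p01 [OF i0(1)] by simp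
  also have "\<dots> \<le> (1 - t) * (\<Sum>i\<in>A. (p i)\<^sup>2 * e i)"
    unfolding sum_distrib_left
  proof (rule sum_mono)
    fix i assume i: "i \<in> A"
    have "0 \<le> (p i - t) * e i"
      using t_le [OF i] t_ge [OF i] by (cases "e i" "0::real" rule: linorder_cases)
        (auto simp: mult_nonpos_nonpos)
    then have "0 \<le> p i * ((p i - t) * e i)" using p01 [OF i] by simp
    then show "t * (p i * (1 - p i) * e i) \<le> (1 - t) * ((p i)\<^sup>2 * e i)"
      by (simp add: algebra_simps power2_eq_square)
  qed
  finally have "0 \<le> (1 - t) * (\<Sum>i\<in>A. (p i)\<^sup>2 * e i)" .
  then show ?thesis
    using i0 p01 [OF i0(1)] by (cases "t < 1") (auto simp: zero_le_mult_iff)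
qed

text \<open>The exceptional case
  of the dichotomy is excluded by induction on the number of summands.\<close>

theorem bern_pois_tail_ratio:
  fixes p :: "nat \<Rightarrow> real"
  assumes lam: "0 \<le> lam" and fin: "finite A" and pr: "probs_on p A"
    and beyond_mean: "lam + (\<Sum>i\<in>A. p i) \<le> real_of_int k"
  shows "real_of_int (k + 1) * bern_conv (pois lam) p A (k + 1)
           \<le> (lam + (\<Sum>i\<in>A. p i)) * bern_conv (pois lam) p A k"
  using fin pr beyond_mean
proof (induction A arbitrary: k rule: finite_remove_induct)
  case empty
  then show ?case using pois_stein [of k lam] by simp
next
  case (remove A)
  let ?F = "bern_conv (pois lam) p"
  have q_nonneg: "\<And>j. 0 \<le> pois lam j" using lam by (simp add: pois_nonneg)
  have gap: "0 \<le> (\<Sum>i\<in>A. (p i)\<^sup>2 * bdiff (?F (A - {i})) k) \<or>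
      (\<exists>i\<in>A. p i = 1 \<and> bdiff (?F (A - {i})) k < 0)"
    by (rule bern_pois_gap_dichotomy [OF lam remove.hyps(1) remove.prems])
  show ?case
  proof (cases "0 \<le> (\<Sum>i\<in>A. (p i)\<^sup>2 * bdiff (?F (A - {i})) k)")
    case True
    then show ?thesis
      using bern_conv_mean_identities(1) [where lam = lam and p = p and k = k, OF pois_stein remove.hyps(1)] by simp
  next
    case False
    (* A summand that is almost surely 1 merely shifts the law by one; the induction
       hypothesis for the shifted law contradicts its strict rise at k. *)
    with gap obtain i where i: "i \<in> A" "p i = 1" and rises: "?F (A - {i}) (k - 1) < ?F (A - {i}) k"
      by (auto simp: bdiff_def)
    define A' where "A' = A - {i}"
    have sum_A: "(\<Sum>j\<in>A. p j) = 1 + (\<Sum>j\<in>A'. p j)"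
      unfolding A'_def using sum.remove [OF remove.hyps(1) i(1), of p] i(2) by simp
    have pr': "probs_on p A'" using remove.prems(1) unfolding A'_def probs_on_def by auto
    have F'_nonneg: "0 \<le> ?F A' x" for x
      using remove.hyps(1) by (intro bern_conv_nonneg [OF q_nonneg _ pr']) (simp add: A'_def)
    have "0 \<le> (\<Sum>j\<in>A'. p j)" using pr' by (intro sum_nonneg) (auto simp: probs_on_def)
    then have k1: "1 \<le> real_of_int k" using remove.prems(2) sum_A lam by simp
    have beyond': "lam + (\<Sum>j\<in>A'. p j) \<le> real_of_int (k - 1)"
      using remove.prems(2) sum_A by simp
    have "real_of_int k * ?F A' k \<le> (lam + (\<Sum>j\<in>A'. p j)) * ?F A' (k - 1)"
      using remove.IH [OF i(1) pr' [unfolded A'_def] beyond' [unfolded A'_def]]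
      unfolding A'_def by simp
    also have "\<dots> \<le> (real_of_int k - 1) * ?F A' (k - 1)"
      using beyond' F'_nonneg by (intro mult_right_mono) auto
    also have "\<dots> \<le> (real_of_int k - 1) * ?F A' k"
      using rises k1 unfolding A'_def by (intro mult_left_mono) auto
    finally have "?F A' k \<le> 0" by (simp add: algebra_simps)
    then show ?thesis using rises F'_nonneg [of "k - 1"] unfolding A'_def by simp
  qed
qed

lemma bern_conv_flip:
  assumes "finite A"
  shows "bern_conv q (\<lambda>i. 1 - p i) A k = bern_conv (\<lambda>j. q (- j)) p A (int (card A) - k)"
  using assms
proof (induction A arbitrary: k rule: finite_induct)
  case (insert a A)
  have "int (card (insert a A)) - k = int (card A) - (k - 1)" using insert by simp
  then show ?case using insert by (simp add: bern_conv_insert bern_mix_def algebra_simps)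
qed simp

lemma bern_conv_split:
  assumes q_neg: "\<And>j. j < 0 \<Longrightarrow> q j = 0" and "finite A"
  shows "bern_conv q p A k = (\<Sum>j\<in>{0..k}. q j * bern_conv (pois 0) p A (k - j))"
  using assms(2)
proof (induction A arbitrary: k rule: finite_induct)
  case empty
  show ?case
  proof (cases "0 \<le> k")
    case True
    have "(\<Sum>j\<in>{0..k}. q j * pois 0 (k - j)) = (\<Sum>j\<in>{0..k}. if j = k then q k else 0)"
      by (rule sum.cong) (auto simp: pois_zero)
    then show ?thesis using True by simp
  qed (simp add: q_neg)
next
  case (insert a A)
  let ?f = "bern_conv (pois 0) p A"
  have shifted: "(\<Sum>j\<in>{0..k}. q j * ?f (k - j - 1)) = bern_conv q p A (k - 1)"
  proof (cases "0 \<le> k")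
    case True
    have "{0..k} = insert k {0..k - 1}" using True by auto
    then have "(\<Sum>j\<in>{0..k}. q j * ?f (k - j - 1)) = (\<Sum>j\<in>{0..k - 1}. q j * ?f (k - 1 - j))"
      by (simp add: bern_conv_neg pois_neg algebra_simps)
    then show ?thesis using insert.IH by simp
  qed (simp add: bern_conv_neg q_neg)
  have "(\<Sum>j\<in>{0..k}. q j * bern_conv (pois 0) p (insert a A) (k - j))
      = (\<Sum>j\<in>{0..k}. (1 - p a) * (q j * ?f (k - j)) + p a * (q j * ?f (k - j - 1)))"
    using insert.hyps by (intro sum.cong) (simp_all add: bern_conv_insert bern_mix_def algebra_simps)
  also have "\<dots> = (1 - p a) * (\<Sum>j\<in>{0..k}. q j * ?f (k - j)) + p a * (\<Sum>j\<in>{0..k}. q j * ?f (k - j - 1))"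
    by (simp add: sum.distrib sum_distrib_left)
  also have "\<dots> = (1 - p a) * bern_conv q p A k + p a * bern_conv q p A (k - 1)"
    using insert.IH [of k] shifted by simp
  finally show ?case
    using insert.hyps by (simp add: bern_conv_insert bern_mix_def)
qed

text \<open>The tail bound applied to the reflected sum \<open>|A| - S\<close> gives the mirror bound below the mean.\<close>

lemma bern_head_ratio:
  assumes fin: "finite A" and pr: "probs_on p A"
    and below_mean: "real_of_int k + 1 \<le> (\<Sum>i\<in>A. p i)"
  defines "f \<equiv> bern_conv (pois 0) p A" and "n \<equiv> card A"
  shows "real_of_int (int n - k) * f k \<le> (real n - (\<Sum>i\<in>A. p i)) * f (k + 1)"
proof -
  define p' where "p' i = 1 - p i" for i
  have pr': "probs_on p' A" using pr unfolding probs_on_def p'_def by auto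
  have sum': "(\<Sum>i\<in>A. p' i) = real n - (\<Sum>i\<in>A. p i)"
    unfolding p'_def n_def by (simp add: sum_subtractf)
  have flip: "bern_conv (pois 0) p' A x = f (int n - x)" for x
    using bern_conv_flip [OF fin, of "pois 0" p x]
    unfolding p'_def f_def n_def by (simp add: pois_zero)
  have "real_of_int (int n - k - 1 + 1) * bern_conv (pois 0) p' A (int n - k - 1 + 1)
      \<le> (0 + (\<Sum>i\<in>A. p' i)) * bern_conv (pois 0) p' A (int n - k - 1)"
    using below_mean sum' by (intro bern_pois_tail_ratio [OF order_refl fin pr']) simp
  then show ?thesis unfolding flip sum' by simp
qed

lemma bern_mode_near_mean:
  assumes fin: "finite A" and pr: "probs_on p A"
    and mode: "\<And>k. bern_conv (pois 0) p A k \<le> bern_conv (pois 0) p A m"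
    and pos: "0 < bern_conv (pois 0) p A m"
  defines "mu \<equiv> \<Sum>i\<in>A. p i"
  shows "real_of_int m - 1 < mu" and "mu < real_of_int m + 1"
proof -
  let ?f = "bern_conv (pois 0) p A"
  have f_nonneg: "0 \<le> ?f x" for x
    by (rule bern_conv_nonneg [OF _ fin pr]) (simp add: pois_nonneg)
  have mu_nonneg: "0 \<le> mu" and mu_le: "mu \<le> real (card A)"
    unfolding mu_def using pr sum_mono [of A p "\<lambda>_. 1"] by (auto simp: probs_on_def intro: sum_nonneg)
  show "real_of_int m - 1 < mu"
  proof (rule ccontr)
    assume "\<not> ?thesis"
    then have beyond: "0 + mu \<le> real_of_int (m - 1)" by simp
    have "real_of_int m * ?f m \<le> mu * ?f (m - 1)"
      using bern_pois_tail_ratio [OF order_refl fin pr beyond [unfolded mu_def]] by (simp add: mu_def)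
    also have "\<dots> \<le> (real_of_int m - 1) * ?f (m - 1)"
      using beyond f_nonneg by (intro mult_right_mono) auto
    also have "\<dots> \<le> (real_of_int m - 1) * ?f m"
      using beyond mu_nonneg mode by (intro mult_left_mono) auto
    finally show False using pos by (simp add: algebra_simps)
  qed
  show "mu < real_of_int m + 1"
  proof (rule ccontr)
    assume "\<not> ?thesis"
    then have below: "real_of_int m + 1 \<le> mu" by simp
    have "real_of_int (int (card A) - m) * ?f m \<le> (real (card A) - mu) * ?f (m + 1)"
      using bern_head_ratio [OF fin pr below [unfolded mu_def]] by (simp add: mu_def)
    also have "\<dots> \<le> (real (card A) - real_of_int m - 1) * ?f (m + 1)"
      using below f_nonneg by (intro mult_right_mono) auto
    also have "\<dots> \<le> (real (card A) - real_of_int m - 1) * ?f m"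
      using below mu_le mode by (intro mult_left_mono) auto
    finally show False using pos by (simp add: algebra_simps)
  qed
qed

lemma bern_nondecreasing_below_mode:
  assumes fin: "finite A" and pr: "probs_on p A"
    and mode: "\<And>k. bern_conv (pois 0) p A k \<le> bern_conv (pois 0) p A m"
    and pos: "0 < bern_conv (pois 0) p A m"
    and "x < m"
  shows "bern_conv (pois 0) p A x \<le> bern_conv (pois 0) p A (x + 1)"
proof (cases "real_of_int x + 1 \<le> (\<Sum>i\<in>A. p i)")
  case True
  let ?f = "bern_conv (pois 0) p A"
  have mu_le: "(\<Sum>i\<in>A. p i) \<le> real (card A)"
    using pr sum_mono [of A p "\<lambda>_. 1"] by (auto simp: probs_on_def)
  have "real_of_int (int (card A) - x) * ?f x \<le> (real (card A) - (\<Sum>i\<in>A. p i)) * ?f (x + 1)"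
    by (rule bern_head_ratio [OF fin pr True])
  also have "\<dots> \<le> real_of_int (int (card A) - x) * ?f (x + 1)"
    using True bern_conv_nonneg [OF _ fin pr] by (intro mult_right_mono) (auto simp: pois_nonneg)
  finally show ?thesis
    using True mu_le by (simp add: mult_le_cancel_left)
next
  case False
  then have "x + 1 = m"
    using bern_mode_near_mean(1) [OF fin pr mode pos] \<open>x < m\<close> by linarith
  then show ?thesis using mode by simp
qed

lemma conv_nondecreasing:
  fixes q h :: "int \<Rightarrow> real"
  assumes q: "\<And>j. 0 \<le> q j" and h: "\<And>x. 0 \<le> h x" and up: "\<And>x. x < m \<Longrightarrow> h x \<le> h (x + 1)"
    and k: "0 \<le> k" "k < m"
  shows "(\<Sum>j\<in>{0..k}. q j * h (k - j)) \<le> (\<Sum>j\<in>{0..k + 1}. q j * h (k + 1 - j))"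
proof -
  have "(\<Sum>j\<in>{0..k}. q j * h (k - j)) \<le> (\<Sum>j\<in>{0..k}. q j * h (k + 1 - j))"
  proof (rule sum_mono)
    fix j assume "j \<in> {0..k}"
    then have "h (k - j) \<le> h (k - j + 1)" using up k by simp
    then show "q j * h (k - j) \<le> q j * h (k + 1 - j)"
      using q by (simp add: mult_left_mono algebra_simps)
  qed
  also have "\<dots> \<le> q (k + 1) * h 0 + (\<Sum>j\<in>{0..k}. q j * h (k + 1 - j))"
    using q h by simp
  also have "\<dots> = (\<Sum>j\<in>{0..k + 1}. q j * h (k + 1 - j))"
  proof -
    have "{0..k + 1} = insert (k + 1) {0..k}" using k by auto
    then show ?thesis by simp
  qed
  finally show ?thesis .
qed

lemma bern_pois_nondecreasing_below_mode:
  assumes fin: "finite A" and pr: "probs_on p A" and lam: "0 \<le> lam"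
    and mode: "\<And>k. bern_conv (pois 0) p A k \<le> bern_conv (pois 0) p A m"
    and pos: "0 < bern_conv (pois 0) p A m"
    and k: "0 \<le> k" "k < m"
  shows "bern_conv (pois lam) p A k \<le> bern_conv (pois lam) p A (k + 1)"
proof -
  have split: "bern_conv (pois lam) p A x = (\<Sum>j\<in>{0..x}. pois lam j * bern_conv (pois 0) p A (x - j))" for x
    by (rule bern_conv_split) (simp_all add: pois_neg fin)
  show ?thesis
    unfolding split
  proof (rule conv_nondecreasing [OF _ _ _ k])
    show "0 \<le> pois lam j" for j using lam by (rule pois_nonneg)
    show "0 \<le> bern_conv (pois 0) p A x" for x
      by (rule bern_conv_nonneg [OF _ fin pr]) (simp add: pois_nonneg)
    show "bern_conv (pois 0) p A x \<le> bern_conv (pois 0) p A (x + 1)" if "x < m" for x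
      by (rule bern_nondecreasing_below_mode [OF fin pr mode pos that])
  qed
qed

text \<open>The tail bound with \<open>lam = 1\<close> and the mean being below \<open>m + 1\<close>: \<open>S + Z\<close> has nonincreasing
  probabilities from \<open>m + 2\<close> on.\<close>

lemma bern_pois_nonincreasing_above_mode:
  assumes fin: "finite A" and pr: "probs_on p A"
    and mode: "\<And>k. bern_conv (pois 0) p A k \<le> bern_conv (pois 0) p A m"
    and pos: "0 < bern_conv (pois 0) p A m"
    and k: "m + 2 \<le> k"
  shows "bern_conv (pois 1) p A (k + 1) \<le> bern_conv (pois 1) p A k"
proof -
  let ?g = "bern_conv (pois 1) p A"
  have beyond: "1 + (\<Sum>i\<in>A. p i) \<le> real_of_int k"
    using bern_mode_near_mean(2) [OF fin pr mode pos] k by linarith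
  have "0 \<le> (\<Sum>i\<in>A. p i)"
    using pr by (auto simp: probs_on_def intro: sum_nonneg)
  have "real_of_int (k + 1) * ?g (k + 1) \<le> (1 + (\<Sum>i\<in>A. p i)) * ?g k"
    by (rule bern_pois_tail_ratio [OF _ fin pr beyond]) simp
  also have "\<dots> \<le> real_of_int (k + 1) * ?g k"
    using beyond bern_conv_nonneg [OF _ fin pr] by (intro mult_right_mono) (auto simp: pois_nonneg)
  finally show ?thesis using beyond \<open>0 \<le> (\<Sum>i\<in>A. p i)\<close> by (simp add: mult_le_cancel_left)
qed

lemma unique_argmax_between:
  fixes h :: "nat \<Rightarrow> real"
  assumes up: "\<And>k. k < a \<Longrightarrow> h k \<le> h (Suc k)"
    and down: "\<And>k. b \<le> k \<Longrightarrow> h (Suc k) \<le> h k"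
    and max: "\<And>k. h k \<le> h m"
    and unique: "\<And>m'. (\<And>k. h k \<le> h m') \<Longrightarrow> m' = m"
  shows "a \<le> m \<and> m \<le> b"
proof
  have "h k \<le> h a" if "k \<le> a" for k
    using that by (induction k rule: inc_induct) (use up order_trans in blast)+
  then have "m < a \<Longrightarrow> a = m" using max unique by (meson order_trans less_imp_le)
  then show "a \<le> m" by linarith
  have "h k \<le> h b" if "b \<le> k" for k
    using that by (induction k rule: dec_induct) (use down order_trans in blast)+
  then have "b < m \<Longrightarrow> b = m" using max unique by (meson order_trans less_imp_le)
  then show "m \<le> b" by linarith
qed

lemma bernoulli_sum_pmf_Suc:
  "bernoulli_sum_pmf (Suc n) p =
     bind_pmf (bernoulli_pmf (p n)) (\<lambda>y. map_pmf (\<lambda>s. s + of_bool y) (bernoulli_sum_pmf n p))"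
proof -
  let ?X = "Pi_pmf {..<n} False (\<lambda>i. bernoulli_pmf (p i))"
  have sum_upd: "(\<Sum>i<Suc n. of_bool ((x(n := y)) i)) = (\<Sum>i<n. of_bool (x i)) + (of_bool y :: nat)"
    for x :: "nat \<Rightarrow> bool" and y
  proof -
    have "(\<Sum>i<n. of_bool ((x(n := y)) i) :: nat) = (\<Sum>i<n. of_bool (x i))"
      by (rule sum.cong) auto
    then show ?thesis by simp
  qed
  have "bernoulli_sum_pmf (Suc n) p =
      map_pmf (\<lambda>x. \<Sum>i<Suc n. of_bool (x i))
        (bind_pmf (bernoulli_pmf (p n)) (\<lambda>y. bind_pmf ?X (\<lambda>x. return_pmf (x(n := y)))))"
    unfolding bernoulli_sum_pmf_def lessThan_Suc by (subst Pi_pmf_insert') auto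
  also have "\<dots> = bind_pmf (bernoulli_pmf (p n))
      (\<lambda>y. bind_pmf ?X (\<lambda>x. return_pmf ((\<Sum>i<n. of_bool (x i)) + of_bool y)))"
    unfolding map_bind_pmf map_return_pmf sum_upd ..
  also have "\<dots> = bind_pmf (bernoulli_pmf (p n)) (\<lambda>y. map_pmf (\<lambda>s. s + of_bool y) (bernoulli_sum_pmf n p))"
    by (simp add: bernoulli_sum_pmf_def map_pmf_def bind_assoc_pmf bind_return_pmf)
  finally show ?thesis .
qed

lemma pmf_indep_sum_bernoulli_Suc:
  fixes Q :: "nat pmf"
  assumes "0 \<le> p n" "p n \<le> 1"
  defines "T \<equiv> indep_sum_pmf (bernoulli_sum_pmf n p) Q"
  shows "pmf (indep_sum_pmf (bernoulli_sum_pmf (Suc n) p) Q) k =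
           (1 - p n) * pmf T k + p n * (if k = 0 then 0 else pmf T (k - 1))"
proof -
  have law: "indep_sum_pmf (bernoulli_sum_pmf (Suc n) p) Q =
      bind_pmf (bernoulli_pmf (p n)) (\<lambda>y. map_pmf (\<lambda>s. s + of_bool y) T)"
    unfolding bernoulli_sum_pmf_Suc indep_sum_pmf_def T_def
    by (simp add: bind_assoc_pmf bind_map_pmf map_bind_pmf map_pmf_comp)
      (intro bind_pmf_cong refl map_pmf_cong; simp)
  have shift: "pmf (map_pmf Suc T) k = (if k = 0 then 0 else pmf T (k - 1))"
  proof (cases k)
    case (Suc j)
    then show ?thesis using pmf_map_inj' [of Suc T j] by simp
  qed (auto intro: pmf_map_outside)
  show ?thesis
    unfolding law pmf_bind using assms shift by (simp add: algebra_simps)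
qed

lemma pmf_indep_sum_bernoulli:
  assumes "\<And>i. i < n \<Longrightarrow> 0 \<le> p i \<and> p i \<le> 1"
  shows "pmf (indep_sum_pmf (bernoulli_sum_pmf n p) Q) k =
           bern_conv (\<lambda>j. if j < 0 then 0 else pmf Q (nat j)) p {..<n} (int k)"
  using assms
proof (induction n arbitrary: k)
  case 0
  have "map_pmf ((+) 0) Q = Q" by (simp add: map_pmf_ident [unfolded id_def] cong: map_pmf_cong)
  then show ?case by (simp add: indep_sum_pmf_def bernoulli_sum_pmf_def bind_return_pmf)
next
  case (Suc n)
  let ?q = "\<lambda>j::int. if j < 0 then 0 else pmf Q (nat j)"
  have "bern_conv ?q p {..<Suc n} = bern_mix (p n) (bern_conv ?q p {..<n})"
    unfolding lessThan_Suc by (rule bern_conv_insert) auto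
  moreover have "bern_conv ?q p {..<n} (- 1) = 0" by (rule bern_conv_neg) auto
  ultimately show ?case
    using Suc by (cases k) (auto simp: pmf_indep_sum_bernoulli_Suc bern_mix_def of_nat_diff)
qed

lemma pmf_bernoulli_sum:
  assumes "\<And>i. i < n \<Longrightarrow> 0 \<le> p i \<and> p i \<le> 1"
  shows "pmf (bernoulli_sum_pmf n p) k = bern_conv (pois 0) p {..<n} (int k)"
proof -
  have "bernoulli_sum_pmf n p = indep_sum_pmf (bernoulli_sum_pmf n p) (return_pmf 0)"
    by (simp add: indep_sum_pmf_def bind_return_pmf')
  moreover have "(\<lambda>j::int. if j < 0 then 0 else pmf (return_pmf (0::nat)) (nat j)) = pois 0"
    by (auto simp: pois_zero fun_eq_iff)
  ultimately show ?thesis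
    using pmf_indep_sum_bernoulli [of n p "return_pmf 0" k] assms by simp
qed

lemma pmf_bernoulli_sum_poisson:
  assumes "\<And>i. i < n \<Longrightarrow> 0 \<le> p i \<and> p i \<le> 1" and "0 < lam"
  shows "pmf (indep_sum_pmf (bernoulli_sum_pmf n p) (poisson_pmf lam)) k
           = bern_conv (pois lam) p {..<n} (int k)"
proof -
  have "(\<lambda>j::int. if j < 0 then 0 else pmf (poisson_pmf lam) (nat j)) = pois lam"
    using assms(2) by (auto simp: pois_def fun_eq_iff)
  then show ?thesis
    using pmf_indep_sum_bernoulli [of n p "poisson_pmf lam" k] assms(1) by simp
qed

theorem proposition1:
  fixes n :: nat and p :: "nat \<Rightarrow> real" and m0 m1 :: nat
  assumes "\<And>i. i < n \<Longrightarrow> 0 \<le> p i \<and> p i \<le> 1"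
    and "is_mode (indep_sum_pmf (bernoulli_sum_pmf n p) (poisson_pmf 1)) m1"
    and "\<And>m. is_mode (indep_sum_pmf (bernoulli_sum_pmf n p) (poisson_pmf 1)) m \<Longrightarrow> m = m1"
    and "is_mode (bernoulli_sum_pmf n p) m0"
  shows "m0 \<le> m1 \<and> m1 \<le> m0 + 2"
proof -
  let ?S = "bernoulli_sum_pmf n p" and ?T = "indep_sum_pmf (bernoulli_sum_pmf n p) (poisson_pmf 1)"
  let ?f = "bern_conv (pois 0) p {..<n}"
  have fin: "finite {..<n}" and pr: "probs_on p {..<n}"
    using assms(1) by (auto simp: probs_on_def)
  have pmf_S: "pmf ?S k = ?f (int k)" for k
    using pmf_bernoulli_sum [of n p k] assms(1) by simp
  have pmf_T: "pmf ?T k = bern_conv (pois 1) p {..<n} (int k)" for k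
    using pmf_bernoulli_sum_poisson [of n p 1 k] assms(1) by simp
  have mode: "?f k \<le> ?f (int m0)" for k
  proof (cases "k < 0")
    case True
    then show ?thesis
      using bern_conv_neg [of "pois 0" k] pmf_nonneg [of ?S m0] pmf_S [of m0] by (simp add: pois_neg)
  next
    case False
    then have "?f k = pmf ?S (nat k)" using pmf_S [of "nat k"] by simp
    then show ?thesis using assms(4) pmf_S [of m0] by (simp add: is_mode_def)
  qed
  have pos: "0 < ?f (int m0)"
    using set_pmf_not_empty [of ?S] pmf_positive mode pmf_S by (metis ex_in_conv order_less_le_trans)
  have "m0 \<le> m1 \<and> m1 \<le> m0 + 2"
  proof (rule unique_argmax_between [where h = "pmf ?T"])
    show "pmf ?T k \<le> pmf ?T (Suc k)" if "k < m0" for k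
      using bern_pois_nondecreasing_below_mode [OF fin pr zero_le_one mode pos, of "int k"] that
      by (simp add: pmf_T add.commute)
    show "pmf ?T (Suc k) \<le> pmf ?T k" if "m0 + 2 \<le> k" for k
      using bern_pois_nonincreasing_above_mode [OF fin pr mode pos, of "int k"] that
      by (simp add: pmf_T add.commute)
    show "pmf ?T k \<le> pmf ?T m1" for k
      using assms(2) by (simp add: is_mode_def)
    show "m = m1" if "\<And>k. pmf ?T k \<le> pmf ?T m" for m
      using assms(3) that by (simp add: is_mode_def)
  qed
  then show ?thesis .
qed

end
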